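(* There exists a family $\mathcal{T}\subset\mathcal{L}$ with $|\mathcal{T}|=2^{\mathfrak{c}}$ such that for every $\tau\in\mathcal{T}$ the space $(\mathbb{R},\tau)$ is a completely normal Baire space, and for distinct $\tau,\tau'\in\mathcal{T}$ the spaces $(\mathbb{R},\tau)$ and $(\mathbb{R},\tau')$ are not homeomorphic.
   Context: $\mathfrak{c}=|\mathbb{R}|$. $\eta$ denotes the Euclidean topology on $\mathbb{R}$. $\mathcal{L}$ denotes the family of all Hausdorff topologies $\tau$ on the set $\mathbb{R}$ with $\tau\subset\eta$ (i.e. coarser than the Euclidean topology). *)

theory Defs
  imports "HOL-Analysis.Analysis" "HOL-Library.Equipollence"
begin

text \<open>The family L: Hausdorff topologies on the set of reals coarser than the Euclidean topology.\<close>
definition coarser_Hausdorff_topologies :: "real topology set" where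
  "coarser_Hausdorff_topologies =
     {\<tau>. topspace \<tau> = UNIV \<and> Hausdorff_space \<tau> \<and> (\<forall>U. openin \<tau> U \<longrightarrow> open U)}"

definition completely_normal_space :: "'a topology \<Rightarrow> bool" where
  "completely_normal_space X \<longleftrightarrow> (\<forall>S. S \<subseteq> topspace X \<longrightarrow> normal_space (subtopology X S))"

definition Baire_space :: "'a topology \<Rightarrow> bool" where
  "Baire_space X \<longleftrightarrow>
     (\<forall>\<U>. countable \<U> \<and> (\<forall>U\<in>\<U>. openin X U \<and> X closure_of U = topspace X)
        \<longrightarrow> X closure_of (topspace X \<inter> \<Inter>\<U>) = topspace X)"

end

theory Submission
  imports Defs
begin

(* Fix an almost disjoint family (S r) of infinite sets of naturals indexed by the reals,
   e.g. S r coding the dyadic approximations of r.  For a set A of reals, take the topology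
   on the reals that is Euclidean away from 0 and in which 0 is glued to the positive
   integers: a neighbourhood of 0 must contain balls of a common radius around 0 and around
   every n + 1, except for n in a thin set, i.e. one covered by a finite set and finitely
   many S r with r not in A.  These topologies are regular and coarser than the Euclidean
   one, hence hereditarily Lindeloef and so completely normal; they have the Euclidean dense
   sets, so they are Baire; and A can be read off the topology, because S r with r in A is
   never thin.  A homeomorphism between two of them is continuous into the coarsest one,
   which is Hausdorff, so it is determined by its values on the rationals, and it determines
   its target.  Hence every homeomorphism class has at most c members, and one member per
   class leaves 2^c pairwise non-homeomorphic topologies. *)

definition dyadic_trace :: "real \<Rightarrow> nat set" where
  "dyadic_trace r = range (\<lambda>k. prod_encode (k, to_nat \<lfloor>2 ^ k * r\<rfloor>))"

lemma infinite_dyadic_trace: "infinite (dyadic_trace r)"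
proof -
  have "inj (\<lambda>k. prod_encode (k, to_nat \<lfloor>2 ^ k * r\<rfloor>))"
    by (auto intro: injI)
  then show ?thesis
    unfolding dyadic_trace_def by (rule range_inj_infinite)
qed

lemma finite_dyadic_trace_Int:
  assumes "r \<noteq> s"
  shows "finite (dyadic_trace r \<inter> dyadic_trace s)"
proof -
  define c where "c = \<bar>r - s\<bar>"
  have "c > 0" using assms by (simp add: c_def)
  obtain N where N: "1 / c < 2 ^ N"
    using real_arch_pow[of 2 "1 / c"] by auto
  have "k < N" if "\<lfloor>2 ^ k * r\<rfloor> = \<lfloor>2 ^ k * s\<rfloor>" for k :: nat
  proof -
    have "\<bar>2 ^ k * r - 2 ^ k * s\<bar> < 1"
      using that floor_correct[of "2 ^ k * r"] floor_correct[of "2 ^ k * s"] by linarith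
    then have "2 ^ k * c < 1"
      by (simp add: c_def abs_mult flip: right_diff_distrib)
    moreover have "1 < 2 ^ N * c"
      using N \<open>c > 0\<close> by (simp add: field_simps)
    ultimately have "(2::real) ^ k < 2 ^ N"
      using \<open>c > 0\<close> by (metis mult_less_cancel_right_pos order.strict_trans)
    then show "k < N" by simp
  qed
  then have "dyadic_trace r \<inter> dyadic_trace s \<subseteq> (\<lambda>k. prod_encode (k, to_nat \<lfloor>2 ^ k * r\<rfloor>)) ` {..<N}"
    by (auto simp: dyadic_trace_def)
  then show ?thesis
    using finite_surj by blast
qed

definition thin :: "('i \<Rightarrow> nat set) \<Rightarrow> 'i set \<Rightarrow> nat set \<Rightarrow> bool" where
  "thin S A M \<longleftrightarrow> (\<exists>E K. finite E \<and> E \<inter> A = {} \<and> finite K \<and> M \<subseteq> K \<union> \<Union>(S ` E))"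

lemma thin_finite: "finite M \<Longrightarrow> thin S A M"
  unfolding thin_def by (intro exI[of _ "{}"] exI[of _ M]) auto

lemma thin_index: "i \<notin> A \<Longrightarrow> thin S A (S i)"
  unfolding thin_def by (intro exI[of _ "{i}"] exI[of _ "{}"]) auto

lemma thin_Un:
  assumes "thin S A M" "thin S A N"
  shows "thin S A (M \<union> N)"
proof -
  obtain E K E' K' where "finite E" "E \<inter> A = {}" "finite K" "M \<subseteq> K \<union> \<Union>(S ` E)"
    and "finite E'" "E' \<inter> A = {}" "finite K'" "N \<subseteq> K' \<union> \<Union>(S ` E')"
    using assms unfolding thin_def by blast
  then show ?thesis
    unfolding thin_def by (intro exI[of _ "E \<union> E'"] exI[of _ "K \<union> K'"]) auto
qed

lemma thin_subset: "thin S A N \<Longrightarrow> M \<subseteq> N \<Longrightarrow> thin S A M"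
  unfolding thin_def by blast

lemma thin_antimono: "A \<subseteq> B \<Longrightarrow> thin S B M \<Longrightarrow> thin S A M"
  unfolding thin_def by blast

lemma not_thin_index:
  assumes infinite: "\<And>i. infinite (S i)" and almost_disjoint: "\<And>i j. i \<noteq> j \<Longrightarrow> finite (S i \<inter> S j)"
    and "i \<in> A"
  shows "\<not> thin S A (S i)"
proof
  assume "thin S A (S i)"
  then obtain E K where EK: "finite E" "E \<inter> A = {}" "finite K" "S i \<subseteq> K \<union> \<Union>(S ` E)"
    unfolding thin_def by blast
  then have "i \<notin> E" using \<open>i \<in> A\<close> by blast
  have "S i \<subseteq> K \<union> (\<Union>j\<in>E. S i \<inter> S j)"
    using EK(4) by blast
  moreover have "finite (K \<union> (\<Union>j\<in>E. S i \<inter> S j))"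
    using EK(1,3) \<open>i \<notin> E\<close> by (intro finite_UnI finite_UN_I) (auto intro: almost_disjoint)
  ultimately show False
    using infinite[of i] by (meson finite_subset)
qed

definition zero_nbhd :: "nat set \<Rightarrow> real \<Rightarrow> real set" where
  "zero_nbhd M \<delta> = (\<Union>p \<in> insert 0 (real ` Suc ` (- M)). ball p \<delta>)"

lemma open_zero_nbhd: "open (zero_nbhd M \<delta>)"
  unfolding zero_nbhd_def by blast

lemma zero_in_zero_nbhd: "\<delta> > 0 \<Longrightarrow> 0 \<in> zero_nbhd M \<delta>"
  unfolding zero_nbhd_def by auto

lemma zero_nbhd_mono: "N \<subseteq> M \<Longrightarrow> \<delta> \<le> \<epsilon> \<Longrightarrow> zero_nbhd M \<delta> \<subseteq> zero_nbhd N \<epsilon>"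
  unfolding zero_nbhd_def by (intro UN_mono insert_mono image_mono subset_ball) auto

definition glued_open :: "('i \<Rightarrow> nat set) \<Rightarrow> 'i set \<Rightarrow> real set \<Rightarrow> bool" where
  "glued_open S A U \<longleftrightarrow> open U \<and> (0 \<in> U \<longrightarrow> (\<exists>\<delta>>0. \<exists>M. thin S A M \<and> zero_nbhd M \<delta> \<subseteq> U))"

lemma glued_openI: "open U \<Longrightarrow> \<delta> > 0 \<Longrightarrow> thin S A M \<Longrightarrow> zero_nbhd M \<delta> \<subseteq> U \<Longrightarrow> glued_open S A U"
  unfolding glued_open_def by blast

lemma glued_openE:
  assumes "glued_open S A U" "0 \<in> U"
  obtains \<delta> M where "\<delta> > 0" "thin S A M" "zero_nbhd M \<delta> \<subseteq> U"
  using assms unfolding glued_open_def by blast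

lemma istopology_glued_open: "istopology (glued_open S A)"
  unfolding istopology_def
proof (intro conjI allI impI ballI)
  fix U V assume U: "glued_open S A U" and V: "glued_open S A V"
  show "glued_open S A (U \<inter> V)"
    unfolding glued_open_def
  proof (intro conjI impI)
    show "open (U \<inter> V)" using U V by (auto simp: glued_open_def)
    assume "0 \<in> U \<inter> V"
    then obtain \<delta> \<epsilon> M N where "\<delta> > 0" "thin S A M" "zero_nbhd M \<delta> \<subseteq> U"
      and "\<epsilon> > 0" "thin S A N" "zero_nbhd N \<epsilon> \<subseteq> V"
      using U V unfolding glued_open_def by blast
    moreover have "zero_nbhd (M \<union> N) (min \<delta> \<epsilon>) \<subseteq> zero_nbhd M \<delta> \<inter> zero_nbhd N \<epsilon>"
      using zero_nbhd_mono[of M "M \<union> N" "min \<delta> \<epsilon>" \<delta>] zero_nbhd_mono[of N "M \<union> N" "min \<delta> \<epsilon>" \<epsilon>]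
      by auto
    ultimately have "min \<delta> \<epsilon> > 0" "thin S A (M \<union> N)" "zero_nbhd (M \<union> N) (min \<delta> \<epsilon>) \<subseteq> U \<inter> V"
      by (auto simp: thin_Un)
    then show "\<exists>\<delta>>0. \<exists>M. thin S A M \<and> zero_nbhd M \<delta> \<subseteq> U \<inter> V"
      by blast
  qed
next
  fix \<U> assume \<U>: "\<forall>U\<in>\<U>. glued_open S A U"
  show "glued_open S A (\<Union>\<U>)"
    unfolding glued_open_def
  proof (intro conjI impI)
    show "open (\<Union>\<U>)" using \<U> by (auto simp: glued_open_def)
    assume "0 \<in> \<Union>\<U>"
    then obtain U \<delta> M where "U \<in> \<U>" "\<delta> > 0" "thin S A M" "zero_nbhd M \<delta> \<subseteq> U"
      using \<U> unfolding glued_open_def by blast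
    then show "\<exists>\<delta>>0. \<exists>M. thin S A M \<and> zero_nbhd M \<delta> \<subseteq> \<Union>\<U>"
      by blast
  qed
qed

definition glued_topology :: "('i \<Rightarrow> nat set) \<Rightarrow> 'i set \<Rightarrow> real topology" where
  "glued_topology S A = topology (glued_open S A)"

lemma openin_glued_topology: "openin (glued_topology S A) U \<longleftrightarrow> glued_open S A U"
  by (simp add: glued_topology_def istopology_glued_open)

lemma topspace_glued_topology [simp]: "topspace (glued_topology S A) = UNIV"
proof -
  have "glued_open S A UNIV"
    using glued_openI[OF open_UNIV zero_less_one thin_finite[of "{}"]] by simp
  then show ?thesis
    by (metis openin_glued_topology openin_subset top.extremum_unique)
qed

lemma openin_glued_imp_open: "openin (glued_topology S A) U \<Longrightarrow> open U"
  by (simp add: openin_glued_topology glued_open_def)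

lemma openin_glued_if_zero_notin: "open U \<Longrightarrow> 0 \<notin> U \<Longrightarrow> openin (glued_topology S A) U"
  by (simp add: openin_glued_topology glued_open_def)

lemma openin_glued_antimono:
  "A \<subseteq> B \<Longrightarrow> openin (glued_topology S B) U \<Longrightarrow> openin (glued_topology S A) U"
  unfolding openin_glued_topology glued_open_def by (meson thin_antimono)

lemma closedin_glued_topology: "closedin (glued_topology S A) C \<longleftrightarrow> glued_open S A (- C)"
  by (simp add: closedin_def openin_glued_topology Compl_eq_Diff_UNIV)

lemma closedin_glued_if_zero_in: "closed C \<Longrightarrow> 0 \<in> C \<Longrightarrow> closedin (glued_topology S A) C"
  by (simp add: closedin_glued_topology glued_open_def open_Compl)

lemma closedin_glued_if_compact:
  assumes "compact C" "0 \<notin> C"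
  shows "closedin (glued_topology S A) C"
proof -
  obtain b where b: "\<And>x. x \<in> C \<Longrightarrow> \<bar>x\<bar> \<le> b"
    using compact_imp_bounded[OF assms(1)] unfolding bounded_iff by auto
  have "open (- C)"
    using assms(1) compact_imp_closed by blast
  then obtain \<delta> where "\<delta> > 0" "ball 0 \<delta> \<subseteq> - C"
    using assms(2) open_contains_ball by blast
  define M where "M = {n. real (Suc n) \<le> b + 1}"
  have "finite M"
    by (rule finite_subset[of _ "{..nat \<lceil>b\<rceil>}"]) (auto simp: M_def, linarith)
  have "zero_nbhd M (min \<delta> 1) \<subseteq> - C"
    using \<open>ball 0 \<delta> \<subseteq> - C\<close> b by (force simp: zero_nbhd_def M_def dist_real_def)
  then show ?thesis
    unfolding closedin_glued_topology using \<open>open (- C)\<close> \<open>\<delta> > 0\<close> thin_finite[OF \<open>finite M\<close>]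
    by (intro glued_openI) auto
qed

lemma closure_UN_balls_subset:
  fixes P :: "'a::metric_space set"
  assumes "\<delta> < \<epsilon>"
  shows "closure (\<Union>p\<in>P. ball p \<delta>) \<subseteq> (\<Union>p\<in>P. ball p \<epsilon>)"
proof
  fix y assume "y \<in> closure (\<Union>p\<in>P. ball p \<delta>)"
  then obtain z p where "p \<in> P" "dist p z < \<delta>" "dist z y < \<epsilon> - \<delta>"
    using assms unfolding closure_approachable by (metis UN_E diff_gt_0_iff_gt mem_ball)
  then have "dist p y < \<epsilon>"
    using dist_triangle[of p y z] by linarith
  then show "y \<in> (\<Union>p\<in>P. ball p \<epsilon>)"
    using \<open>p \<in> P\<close> by auto
qed

lemma regular_space_glued_topology: "regular_space (glued_topology S A)"
  unfolding neighbourhood_base_of_closedin[symmetric] neighbourhood_base_of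
proof (intro allI impI, elim conjE)
  fix W x assume "openin (glued_topology S A) W" "x \<in> W"
  then have W: "glued_open S A W"
    by (simp add: openin_glued_topology)
  show "\<exists>U V. openin (glued_topology S A) U \<and> closedin (glued_topology S A) V \<and> x \<in> U \<and> U \<subseteq> V \<and> V \<subseteq> W"
  proof (cases "x = 0")
    case False
    have "open W"
      using W by (simp add: glued_open_def)
    then obtain r where "r > 0" "cball x r \<subseteq> W"
      using \<open>x \<in> W\<close> open_contains_cball by blast
    define r' where "r' = min r (\<bar>x\<bar> / 2)"
    have "r' > 0" "0 \<notin> cball x r'"
      using False \<open>r > 0\<close> by (auto simp: r'_def dist_real_def)
    have "openin (glued_topology S A) (ball x r')"
      using \<open>0 \<notin> cball x r'\<close> by (intro openin_glued_if_zero_notin) auto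
    moreover have "closedin (glued_topology S A) (cball x r')"
      using \<open>0 \<notin> cball x r'\<close> by (intro closedin_glued_if_compact) auto
    moreover have "cball x r' \<subseteq> W"
      using \<open>cball x r \<subseteq> W\<close> subset_cball[of r' r x] by (simp add: r'_def)
    ultimately show ?thesis
      using \<open>r' > 0\<close> by (intro exI[of _ "ball x r'"] exI[of _ "cball x r'"]) auto
  next
    case True
    then obtain \<delta> M where "\<delta> > 0" "thin S A M" "zero_nbhd M \<delta> \<subseteq> W"
      using W \<open>x \<in> W\<close> by (auto elim: glued_openE)
    define U where "U = zero_nbhd M (\<delta> / 2)"
    have "openin (glued_topology S A) U"
      unfolding openin_glued_topology U_def
      by (rule glued_openI[OF open_zero_nbhd _ \<open>thin S A M\<close> order_refl]) (simp add: \<open>\<delta> > 0\<close>)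
    moreover have "x \<in> U"
      using True \<open>\<delta> > 0\<close> by (simp add: U_def zero_in_zero_nbhd)
    moreover have "closedin (glued_topology S A) (closure U)"
      using \<open>x \<in> U\<close> True closure_subset by (intro closedin_glued_if_zero_in) auto
    moreover have "closure U \<subseteq> zero_nbhd M \<delta>"
      unfolding U_def zero_nbhd_def using \<open>\<delta> > 0\<close> by (intro closure_UN_balls_subset) simp
    ultimately show ?thesis
      using \<open>zero_nbhd M \<delta> \<subseteq> W\<close> closure_subset
      by (intro exI[of _ U] exI[of _ "closure U"]) auto
  qed
qed

lemma t1_space_glued_topology: "t1_space (glued_topology S A)"
  unfolding t1_space_closedin_singleton
proof
  fix x :: real
  show "closedin (glued_topology S A) {x}"
    by (cases "x = 0") (auto intro: closedin_glued_if_zero_in closedin_glued_if_compact)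
qed

lemma Hausdorff_space_glued_topology: "Hausdorff_space (glued_topology S A)"
  by (simp add: regular_t1_imp_Hausdorff_space regular_space_glued_topology t1_space_glued_topology)

lemma Lindelof_space_glued_subtopology: "Lindelof_space (subtopology (glued_topology S A) T)"
  unfolding Lindelof_space_subtopology
proof (intro allI impI, elim conjE)
  fix \<U> assume \<U>: "\<forall>U\<in>\<U>. openin (glued_topology S A) U"
    and cover: "topspace (glued_topology S A) \<inter> T \<subseteq> \<Union>\<U>"
  obtain \<V> where "\<V> \<subseteq> \<U>" "countable \<V>" "\<Union>\<V> = \<Union>\<U>"
    using Lindelof[of \<U>] \<U> openin_glued_imp_open by metis
  with cover show "\<exists>\<V>. countable \<V> \<and> \<V> \<subseteq> \<U> \<and> topspace (glued_topology S A) \<inter> T \<subseteq> \<Union>\<V>"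
    by (intro exI[of _ \<V>]) auto
qed

lemma completely_normal_glued_topology: "completely_normal_space (glued_topology S A)"
  unfolding completely_normal_space_def
  by (intro allI impI regular_Lindelof_imp_normal_space regular_space_subtopology
      regular_space_glued_topology Lindelof_space_glued_subtopology)

lemma dense_in_coarser_topology:
  assumes "topspace X = UNIV" "\<And>U. openin X U \<Longrightarrow> open U" "closure D = UNIV"
  shows "X closure_of D = UNIV"
  using assms dense_intersects_open[of euclidean D] dense_intersects_open[of X D] by auto

lemma Baire_space_coarser_euclidean:
  fixes X :: "'a::{real_normed_vector,heine_borel} topology"
  assumes top: "topspace X = UNIV" and coarser: "\<And>U. openin X U \<Longrightarrow> open U"
    and pi_base: "\<And>T. open T \<Longrightarrow> T \<noteq> {} \<Longrightarrow> \<exists>U. openin X U \<and> U \<noteq> {} \<and> U \<subseteq> T"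
  shows "Baire_space X"
proof -
  have dense_iff: "X closure_of D = UNIV \<longleftrightarrow> closure D = UNIV" for D
  proof
    assume "X closure_of D = UNIV"
    then have "D \<inter> T \<noteq> {}" if "open T" "T \<noteq> {}" for T
      using pi_base[OF that] top dense_intersects_open[of X D] by blast
    then show "closure D = UNIV"
      using dense_intersects_open[of euclidean D] by simp
  qed (use top coarser dense_in_coarser_topology in blast)
  show ?thesis
    unfolding Baire_space_def top
  proof (intro allI impI, elim conjE)
    fix \<U> assume "countable \<U>" "\<forall>U\<in>\<U>. openin X U \<and> X closure_of U = UNIV"
    then have "UNIV \<subseteq> closure (\<Inter>\<U>)"
      by (intro Baire) (auto simp: coarser dense_iff)
    then show "X closure_of (UNIV \<inter> \<Inter>\<U>) = UNIV"
      by (simp add: dense_iff top_le)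
  qed
qed

lemma Baire_space_glued_topology: "Baire_space (glued_topology S A)"
proof (rule Baire_space_coarser_euclidean)
  fix T :: "real set" assume "open T" "T \<noteq> {}"
  moreover have "T - {0} \<noteq> {}"
    using calculation not_open_singleton by (metis Diff_eq_empty_iff subset_singletonD)
  ultimately show "\<exists>U. openin (glued_topology S A) U \<and> U \<noteq> {} \<and> U \<subseteq> T"
    by (meson Diff_subset openin_glued_if_zero_notin open_Diff closed_singleton DiffD2 singletonI)
qed (auto intro: openin_glued_imp_open)

lemma glued_topology_in_coarser_Hausdorff: "glued_topology S A \<in> coarser_Hausdorff_topologies"
  unfolding coarser_Hausdorff_topologies_def
  using Hausdorff_space_glued_topology openin_glued_imp_open by auto

lemma not_glued_open_zero_nbhd_index:
  assumes "\<And>i. infinite (S i)" "\<And>i j. i \<noteq> j \<Longrightarrow> finite (S i \<inter> S j)" "i \<in> A"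
  shows "\<not> glued_open S A (zero_nbhd (S i) (1/2))"
proof
  assume "glued_open S A (zero_nbhd (S i) (1/2))"
  moreover have "0 \<in> zero_nbhd (S i) (1/2)"
    by (simp add: zero_in_zero_nbhd)
  ultimately obtain \<delta> M where "\<delta> > 0" "thin S A M" and sub: "zero_nbhd M \<delta> \<subseteq> zero_nbhd (S i) (1/2)"
    by (rule glued_openE)
  have "\<not> S i \<subseteq> M"
    using not_thin_index[OF assms] thin_subset[OF \<open>thin S A M\<close>] by meson
  then obtain n where "n \<in> S i" "n \<notin> M"
    by blast
  then have "real (Suc n) \<in> insert 0 (real ` Suc ` (- M))"
    by blast
  then have "real (Suc n) \<in> zero_nbhd M \<delta>"
    unfolding zero_nbhd_def by (rule UN_I) (simp add: \<open>\<delta> > 0\<close>)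
  then have "real (Suc n) \<in> zero_nbhd (S i) (1/2)"
    by (rule subsetD[OF sub])
  then obtain p where p: "p \<in> insert 0 (real ` Suc ` (- S i))" "real (Suc n) \<in> ball p (1/2)"
    unfolding zero_nbhd_def by (rule UN_E)
  then consider "p = 0" | m where "m \<notin> S i" "p = real (Suc m)"
    by blast
  then show False
  proof cases
    case 1
    then show False
      using p(2) by (simp add: dist_real_def)
  next
    case 2
    then have "m = n"
      using p(2) by (cases m n rule: linorder_cases) (auto simp: dist_real_def)
    then show False
      using 2 \<open>n \<in> S i\<close> by blast
  qed
qed

lemma inj_glued_topology:
  assumes "\<And>i. infinite (S i)" "\<And>i j. i \<noteq> j \<Longrightarrow> finite (S i \<inter> S j)"
  shows "inj (glued_topology S)"
proof -
  have sub: "A \<subseteq> B" if "glued_topology S A = glued_topology S B" for A B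
  proof
    fix i assume "i \<in> A"
    show "i \<in> B"
    proof (rule ccontr)
      assume "i \<notin> B"
      have "glued_open S B (zero_nbhd (S i) (1/2))"
        by (rule glued_openI[OF open_zero_nbhd _ thin_index[OF \<open>i \<notin> B\<close>] order_refl]) simp
      then have "openin (glued_topology S A) (zero_nbhd (S i) (1/2))"
        using that by (simp add: openin_glued_topology)
      then show False
        using not_glued_open_zero_nbhd_index[of S, OF assms \<open>i \<in> A\<close>] by (simp add: openin_glued_topology)
    qed
  qed
  show ?thesis
  proof (rule injI)
    fix A B assume "glued_topology S A = glued_topology S B"
    then show "A = B"
      using sub[of A B] sub[of B A] by simp
  qed
qed

lemma homeomorphic_map_target_unique:
  assumes "homeomorphic_map X Y f" "homeomorphic_map X Y' f"
  shows "Y = Y'"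
proof -
  have "openin Z V \<longleftrightarrow> V \<subseteq> f ` topspace X \<and> openin X (topspace X \<inter> f -` V)"
    if hom: "homeomorphic_map X Z f" for Z V
  proof -
    have "V \<subseteq> f ` topspace X \<Longrightarrow> f ` (topspace X \<inter> f -` V) = V"
      by blast
    moreover have "openin Z V \<Longrightarrow> V \<subseteq> f ` topspace X"
      using openin_subset homeomorphic_imp_surjective_map[OF hom] by metis
    ultimately show ?thesis
      using homeomorphic_map_openness[OF hom, of "topspace X \<inter> f -` V"] by auto
  qed
  then show ?thesis
    using assms by (simp add: topology_eq)
qed

lemma continuous_map_into_glued_UNIV:
  "continuous_map X (glued_topology S A) f \<Longrightarrow> continuous_map X (glued_topology S UNIV) f"
  unfolding continuous_map_def using openin_glued_antimono[of A UNIV] by auto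

lemma glued_homeomorphism_eqI:
  assumes "homeomorphic_map (glued_topology S A) (glued_topology S B) h"
    and "homeomorphic_map (glued_topology S A) (glued_topology S C) g"
    and "\<And>q. h (of_rat q) = g (of_rat q)"
  shows "h = g"
proof
  fix x
  have "glued_topology S A closure_of \<rat> = UNIV"
    by (rule dense_in_coarser_topology) (auto simp: Rats_closure_real intro: openin_glued_imp_open)
  moreover have "continuous_map (glued_topology S A) (glued_topology S UNIV) h"
    "continuous_map (glued_topology S A) (glued_topology S UNIV) g"
    using assms(1,2) by (auto intro: continuous_map_into_glued_UNIV homeomorphic_imp_continuous_map)
  ultimately show "h x = g x"
    by (intro forall_in_closure_of_eq[of x "glued_topology S A" \<rat> "glued_topology S UNIV" h g])
      (auto simp: Hausdorff_space_glued_topology assms(3) elim: Rats_cases)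
qed

lemma glued_homeomorphic_class_lepoll:
  "{Y \<in> range (glued_topology S). glued_topology S A homeomorphic_space Y} \<lesssim> (UNIV :: (rat \<Rightarrow> real) set)"
proof -
  let ?class = "{Y \<in> range (glued_topology S). glued_topology S A homeomorphic_space Y}"
  define h where "h Y = (SOME h :: real \<Rightarrow> real. homeomorphic_map (glued_topology S A) Y h)" for Y
  have h: "homeomorphic_map (glued_topology S A) Y (h Y)" if "Y \<in> ?class" for Y
  proof -
    have "\<exists>h. homeomorphic_map (glued_topology S A) Y h"
      using that by (simp add: homeomorphic_space)
    then show ?thesis
      unfolding h_def by (rule someI_ex)
  qed
  have "inj_on (\<lambda>Y q. h Y (of_rat q)) ?class"
  proof (rule inj_onI)
    fix Y Z assume Y: "Y \<in> ?class" and Z: "Z \<in> ?class"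
      and eq: "(\<lambda>q. h Y (of_rat q)) = (\<lambda>q. h Z (of_rat q))"
    obtain B C where "Y = glued_topology S B" "Z = glued_topology S C"
      using Y Z by blast
    then have "homeomorphic_map (glued_topology S A) (glued_topology S B) (h Y)"
      "homeomorphic_map (glued_topology S A) (glued_topology S C) (h Z)"
      using h[OF Y] h[OF Z] by simp_all
    then have "h Y = h Z"
      by (rule glued_homeomorphism_eqI) (use eq in \<open>simp add: fun_eq_iff\<close>)
    then show "Y = Z"
      using homeomorphic_map_target_unique[OF h[OF Y]] h[OF Z] by simp
  qed
  then show ?thesis
    unfolding lepoll_def by blast
qed

lemma countable_funspace_real_lepoll: "(UNIV :: ('a::countable \<Rightarrow> real) set) \<lesssim> (UNIV :: real set)"
proof -
  obtain \<alpha> :: "real \<Rightarrow> nat set" where "bij_betw \<alpha> UNIV UNIV"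
    using eqpoll_sym[OF nat_sets_eqpoll_reals] unfolding eqpoll_def by blast
  then have "inj \<alpha>"
    by (rule bij_betw_imp_inj_on)
  have "inj (\<lambda>f :: 'a \<Rightarrow> real. to_nat ` (SIGMA x:UNIV. \<alpha> (f x)))"
  proof (rule injI)
    fix f g :: "'a \<Rightarrow> real"
    assume "to_nat ` (SIGMA x:UNIV. \<alpha> (f x)) = to_nat ` (SIGMA x:UNIV. \<alpha> (g x))"
    then have "(SIGMA x:UNIV. \<alpha> (f x)) = (SIGMA x:UNIV. \<alpha> (g x))"
      by (simp add: inj_image_eq_iff)
    then have "\<alpha> (f x) = \<alpha> (g x)" for x
      by (auto simp: set_eq_iff)
    then show "f = g"
      using \<open>inj \<alpha>\<close> by (auto simp: inj_eq)
  qed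
  then have "(UNIV :: ('a \<Rightarrow> real) set) \<lesssim> (UNIV :: nat set set)"
    unfolding lepoll_def by blast
  also have "\<dots> \<approx> (UNIV :: real set)"
    by (rule nat_sets_eqpoll_reals)
  finally show ?thesis .
qed

lemma infinite_Times_self_eqpoll: "infinite A \<Longrightarrow> A \<times> A \<approx> A"
  unfolding eqpoll_def using card_of_ordIso card_of_Times_same_infinite by blast

lemma lepoll_total: "A \<lesssim> B \<or> B \<lesssim> A"
  unfolding lepoll_def
  using ordLeq_total[OF card_of_Well_order card_of_Well_order, of A B] card_of_ordLeq[of A B]
    card_of_ordLeq[of B A] by blast

lemma Union_lepoll_Times:
  assumes "\<And>X. X \<in> \<Q> \<Longrightarrow> X \<lesssim> B"
  shows "\<Union>\<Q> \<lesssim> \<Q> \<times> B"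
proof -
  have "X \<lesssim> {X} \<times> B" if "X \<in> \<Q>" for X
    using assms[OF that] eqpoll_sym[OF times_singleton_eqpoll] by (rule lepoll_trans2)
  moreover have "pairwise (\<lambda>X Y. disjnt ({X} \<times> B) ({Y} \<times> B)) \<Q>"
    by (auto simp: pairwise_def disjnt_def)
  ultimately have "(\<Union>X\<in>\<Q>. X) \<lesssim> (\<Union>X\<in>\<Q>. {X} \<times> B)"
    by (rule UN_lepoll_UN)
  moreover have "(\<Union>X\<in>\<Q>. {X} \<times> B) = \<Q> \<times> B"
    by auto
  ultimately show ?thesis
    by simp
qed

lemma quotient_eqpoll_if_classes_lepoll:
  assumes "equiv F r" and classes: "\<And>X. X \<in> F // r \<Longrightarrow> X \<lesssim> B"
    and "infinite B" "\<not> F \<lesssim> B"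
  shows "F // r \<approx> F"
proof (rule lepoll_antisym)
  have F_le: "F \<lesssim> F // r \<times> B"
    using Union_lepoll_Times[of "F // r" B, OF classes] Union_quotient[OF \<open>equiv F r\<close>] by simp
  have "B \<lesssim> F // r"
  proof (rule ccontr)
    assume "\<not> B \<lesssim> F // r"
    then have "F // r \<lesssim> B"
      using lepoll_total by blast
    then have "F // r \<times> B \<lesssim> B \<times> B"
      by (rule times_lepoll_mono) (rule lepoll_refl)
    then have "F \<lesssim> B"
      by (rule lepoll_trans2[OF lepoll_trans[OF F_le] infinite_Times_self_eqpoll[OF \<open>infinite B\<close>]])
    then show False
      using \<open>\<not> F \<lesssim> B\<close> by blast
  qed
  then have "infinite (F // r)"
    using \<open>infinite B\<close> by (meson infinite_le_lepoll lepoll_trans)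
  have "F // r \<times> B \<lesssim> F // r \<times> F // r"
    by (rule times_lepoll_mono[OF lepoll_refl \<open>B \<lesssim> F // r\<close>])
  then show "F \<lesssim> F // r"
    by (rule lepoll_trans2[OF lepoll_trans[OF F_le] infinite_Times_self_eqpoll[OF \<open>infinite (F // r)\<close>]])
  have "F // r = (\<lambda>x. r `` {x}) ` F"
    by (auto simp: quotient_def)
  then show "F // r \<lesssim> F"
    by (simp add: image_lepoll)
qed

lemma equiv_transversal:
  assumes "equiv F r"
  obtains R where "R \<subseteq> F" "R \<approx> F // r" "\<And>x y. x \<in> R \<Longrightarrow> y \<in> R \<Longrightarrow> (x, y) \<in> r \<Longrightarrow> x = y"
proof -
  define rep where "rep X = (SOME x. x \<in> X)" for X :: "'a set"
  have rep: "rep X \<in> X" if "X \<in> F // r" for X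
    unfolding rep_def using in_quotient_imp_non_empty[OF assms that] by (simp add: some_in_eq)
  have rep_eq: "X = Y" if "X \<in> F // r" "Y \<in> F // r" "(rep X, rep Y) \<in> r" for X Y
    using quotient_eqI[OF assms that(1,2) rep[OF that(1)] rep[OF that(2)] that(3)] .
  show ?thesis
  proof
    show "rep ` (F // r) \<subseteq> F"
      using rep in_quotient_imp_subset[OF assms] by blast
    have "inj_on rep (F // r)"
    proof (rule inj_onI)
      fix X Y assume "X \<in> F // r" "Y \<in> F // r" "rep X = rep Y"
      moreover have "(rep X, rep X) \<in> r"
        using assms rep[OF \<open>X \<in> F // r\<close>] in_quotient_imp_subset[OF assms \<open>X \<in> F // r\<close>]
        by (auto simp: equiv_def refl_on_def)
      ultimately show "X = Y"
        using rep_eq by simp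
    qed
    then show "rep ` (F // r) \<approx> F // r"
      by (rule inj_on_image_eqpoll_self)
    show "x = y" if "x \<in> rep ` (F // r)" "y \<in> rep ` (F // r)" "(x, y) \<in> r" for x y
      using that rep_eq by blast
  qed
qed

lemma exists_inequivalent_subset_eqpoll:
  assumes "equiv F r" "\<And>X. X \<in> F // r \<Longrightarrow> X \<lesssim> B" "infinite B" "\<not> F \<lesssim> B"
  shows "\<exists>R\<subseteq>F. R \<approx> F \<and> (\<forall>x\<in>R. \<forall>y\<in>R. (x, y) \<in> r \<longrightarrow> x = y)"
proof -
  obtain R where R: "R \<subseteq> F" "R \<approx> F // r" "\<And>x y. x \<in> R \<Longrightarrow> y \<in> R \<Longrightarrow> (x, y) \<in> r \<Longrightarrow> x = y"
    using equiv_transversal[OF \<open>equiv F r\<close>] by blast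
  have "F // r \<approx> F"
    by (rule quotient_eqpoll_if_classes_lepoll[of F r B, OF assms])
  then have "R \<approx> F"
    using R(2) eqpoll_trans by blast
  then show ?thesis
    using R(1,3) by blast
qed

lemma eqpoll_Pow_UNIV_not_lepoll: "F \<approx> (UNIV :: 'a set set) \<Longrightarrow> \<not> F \<lesssim> (UNIV :: 'a set)"
proof
  assume "F \<approx> (UNIV :: 'a set set)" "F \<lesssim> (UNIV :: 'a set)"
  then have "Pow (UNIV :: 'a set) \<lesssim> (UNIV :: 'a set)"
    using lepoll_trans1[OF eqpoll_sym] by simp
  then show False
    using lesspoll_trans1[OF _ lesspoll_Pow_self] by blast
qed

lemma equiv_homeomorphic_space: "equiv \<T> {(X, Y). X \<in> \<T> \<and> Y \<in> \<T> \<and> X homeomorphic_space Y}"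
proof (rule equivI)
  show "sym {(X, Y). X \<in> \<T> \<and> Y \<in> \<T> \<and> X homeomorphic_space Y}"
    unfolding sym_def using homeomorphic_space_sym by blast
  show "trans {(X, Y). X \<in> \<T> \<and> Y \<in> \<T> \<and> X homeomorphic_space Y}"
    unfolding trans_def using homeomorphic_space_trans by blast
qed (auto simp: refl_on_def)

lemma glued_homeomorphism_classes_lepoll:
  assumes "\<X> \<in> range (glued_topology S) //
    {(X, Y). X \<in> range (glued_topology S) \<and> Y \<in> range (glued_topology S) \<and> X homeomorphic_space Y}"
  shows "\<X> \<lesssim> (UNIV :: real set)"
proof -
  obtain A where "\<X> = {Y \<in> range (glued_topology S). glued_topology S A homeomorphic_space Y}"
    using assms by (auto elim!: quotientE)
  then show ?thesis
    using lepoll_trans[OF glued_homeomorphic_class_lepoll countable_funspace_real_lepoll] by simp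
qed

theorem theorem1:
  "\<exists>\<T>. \<T> \<subseteq> coarser_Hausdorff_topologies \<and> \<T> \<approx> (UNIV :: real set set) \<and>
       (\<forall>\<tau>\<in>\<T>. completely_normal_space \<tau> \<and> Baire_space \<tau>) \<and>
       (\<forall>\<tau>\<in>\<T>. \<forall>\<tau>'\<in>\<T>. \<tau> \<noteq> \<tau>' \<longrightarrow> \<not> \<tau> homeomorphic_space \<tau>')"
proof -
  let ?F = "range (glued_topology dyadic_trace)"
  let ?r = "{(X, Y). X \<in> ?F \<and> Y \<in> ?F \<and> X homeomorphic_space Y}"
  have F_eqpoll: "?F \<approx> (UNIV :: real set set)"
    using inj_glued_topology[of dyadic_trace, OF infinite_dyadic_trace finite_dyadic_trace_Int]
    by (rule inj_on_image_eqpoll_self)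
  have "\<exists>R\<subseteq>?F. R \<approx> ?F \<and> (\<forall>x\<in>R. \<forall>y\<in>R. (x, y) \<in> ?r \<longrightarrow> x = y)"
    by (rule exists_inequivalent_subset_eqpoll[OF equiv_homeomorphic_space glued_homeomorphism_classes_lepoll
          infinite_UNIV_char_0 eqpoll_Pow_UNIV_not_lepoll[OF F_eqpoll]])
  then obtain R where "R \<subseteq> ?F" "R \<approx> ?F" and inequivalent: "\<forall>x\<in>R. \<forall>y\<in>R. (x, y) \<in> ?r \<longrightarrow> x = y"
    by blast
  show ?thesis
  proof (intro exI[of _ R] conjI ballI impI)
    show "R \<subseteq> coarser_Hausdorff_topologies"
      using \<open>R \<subseteq> ?F\<close> glued_topology_in_coarser_Hausdorff by blast
    show "R \<approx> (UNIV :: real set set)"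
      using eqpoll_trans[OF \<open>R \<approx> ?F\<close> F_eqpoll] .
    show "completely_normal_space \<tau>" "Baire_space \<tau>" if "\<tau> \<in> R" for \<tau>
      using that \<open>R \<subseteq> ?F\<close> completely_normal_glued_topology Baire_space_glued_topology by blast+
    show "\<not> \<tau> homeomorphic_space \<tau>'" if "\<tau> \<in> R" "\<tau>' \<in> R" "\<tau> \<noteq> \<tau>'" for \<tau> \<tau>'
      using that inequivalent \<open>R \<subseteq> ?F\<close> by blast
  qed
qed

end
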